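(* Let $p$ be a prime, $0\le i\le p-1$, $r\ge0$ an integer, and $k$ a positive integer not divisible by $p$. Then $|Q_{i,r}^{(k)}|_m\le p^{(r+1)/2}=\sqrt{p(d_r+1)}$, where $d_r=p^r-1$.
   Context: Fix a prime $p$ and a primitive $p$-th root of unity $\xi$. Let $D$ be the $p\times p$ matrix $D_{j,l}=\xi^{jl}$, $j,l\in\{0,\dots,p-1\}$. Define polynomials $Q_{0,r},\dots,Q_{p-1,r}\in\mathbb{C}[x]$ recursively: $Q_{j,0}:=1$ for all $j$, and for $r\ge0$, $$(Q_{0,r+1},Q_{1,r+1},\dots,Q_{p-1,r+1})^T:=D\cdot\big(Q_{0,r},\,x^{p^r}Q_{1,r},\,x^{2p^r}Q_{2,r},\dots,x^{(p-1)p^r}Q_{p-1,r}\big)^T.$$ Each $Q_{j,r}$ has degree $d_r=p^r-1$ and all coefficients of absolute value 1. For a complex polynomial $g(x)=\sum_ia_ix^i$, $|g|_m:=\max_{|x|=1}|g(x)|$ and $g^{(k)}(x):=\sum_ia_i^kx^i$ (Hadamard power). *)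

theory Defs
  imports "HOL-Analysis.Analysis" "HOL-Computational_Algebra.Polynomial"
begin

text \<open>Rudin-Shapiro-like polynomials Q_{j,r} for prime p and a p-th root of unity xi:
  (Q_{0,r+1},...,Q_{p-1,r+1})^T = D (Q_{0,r}, x^{p^r} Q_{1,r}, ..., x^{(p-1)p^r} Q_{p-1,r})^T
  with D_{j,l} = xi^{j l}.\<close>
fun Qpoly :: "nat \<Rightarrow> complex \<Rightarrow> nat \<Rightarrow> nat \<Rightarrow> complex poly" where
  "Qpoly p \<xi> j 0 = 1"
| "Qpoly p \<xi> j (Suc r) =
     (\<Sum>l<p. smult (\<xi> ^ (j * l)) (monom 1 (l * p ^ r) * Qpoly p \<xi> l r))"

definition hadamard_pow :: "complex poly \<Rightarrow> nat \<Rightarrow> complex poly" where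
  "hadamard_pow g k = Poly (map (\<lambda>c. c ^ k) (coeffs g))"

definition circle_max :: "complex poly \<Rightarrow> real" where
  "circle_max g = (SUP x\<in>{z. cmod z = 1}. cmod (poly g x))"

end

theory Submission imports Defs begin

text \<open>The coefficient of \<open>x^n\<close> in \<open>Q\<^sub>j\<^sub>,\<^sub>r\<close> is a product of powers of \<open>\<xi>\<close> read off the
  base-\<open>p\<close> digits of \<open>n\<close>; hence the \<open>k\<close>-th Hadamard power of \<open>Q\<^sub>j\<^sub>,\<^sub>r\<close> is the same
  polynomial built from \<open>\<xi>\<^sup>k\<close>, which is again a primitive \<open>p\<close>-th root of unity when
  \<open>p \<nmid> k\<close>. For a primitive root, \<open>D/\<surd>p\<close> is unitary, so on the unit circle the recursion and
  Parseval's identity give \<open>\<Sum>\<^sub>j |Q\<^sub>j\<^sub>,\<^sub>r(z)|\<^sup>2 = p\<^sup>r\<^sup>+\<^sup>1\<close>, which bounds each term.\<close>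

definition primitive_root :: "nat \<Rightarrow> complex \<Rightarrow> bool" where
  "primitive_root p \<eta> \<longleftrightarrow> \<eta> ^ p = 1 \<and> (\<forall>j. 0 < j \<and> j < p \<longrightarrow> \<eta> ^ j \<noteq> 1)"

lemma primitive_root_pow_eq_1_iff:
  assumes "primitive_root p \<eta>" "p > 0"
  shows "\<eta> ^ n = 1 \<longleftrightarrow> p dvd n"
proof -
  have "\<eta> ^ n = \<eta> ^ (n mod p)"
    using assms(1) unfolding primitive_root_def
    by (metis div_mult_mod_eq mult.commute power_add power_mult power_one mult_1)
  moreover have "\<eta> ^ (n mod p) = 1 \<longleftrightarrow> n mod p = 0"
    using assms mod_less_divisor[OF assms(2), of n] unfolding primitive_root_def by auto
  ultimately show ?thesis by (simp add: dvd_eq_mod_eq_0)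
qed

lemma primitive_root_power:
  assumes "primitive_root p \<eta>" "prime p" "\<not> p dvd k"
  shows "primitive_root p (\<eta> ^ k)"
  unfolding primitive_root_def
proof (intro conjI allI impI)
  have "p > 0" using assms(2) prime_gt_0_nat by blast
  note pow_eq_1_iff = primitive_root_pow_eq_1_iff[OF assms(1) this]
  show "(\<eta> ^ k) ^ p = 1"
    by (simp add: pow_eq_1_iff flip: power_mult)
  fix j assume "0 < j \<and> j < p"
  then have "\<not> p dvd k * j"
    using assms(2,3) by (simp add: prime_dvd_mult_iff nat_dvd_not_less)
  then show "(\<eta> ^ k) ^ j \<noteq> 1"
    by (simp add: pow_eq_1_iff flip: power_mult)
qed

lemma norm_primitive_root:
  assumes "primitive_root p \<eta>" "p > 0"
  shows "cmod \<eta> = 1"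
proof -
  have "cmod \<eta> ^ p = 1 ^ p"
    using assms(1) unfolding primitive_root_def by (metis norm_one norm_power power_one)
  then show ?thesis
    using assms(2) power_eq_imp_eq_base[of "cmod \<eta>" p 1] by simp
qed

lemma inj_on_primitive_root_powers:
  assumes "primitive_root p \<eta>"
  shows "inj_on (\<lambda>l. \<eta> ^ l) {..<p}"
proof (rule linorder_inj_onI)
  fix l m assume "l < m" "m \<in> {..<p}"
  then have "\<eta> ^ (m - l) \<noteq> 1" "\<eta> \<noteq> 0"
    using assms unfolding primitive_root_def by (auto simp: power_0_left)
  moreover have "\<eta> ^ m = \<eta> ^ l * \<eta> ^ (m - l)"
    using \<open>l < m\<close> by (simp flip: power_add)
  ultimately show "\<eta> ^ l \<noteq> \<eta> ^ m" by auto
qed auto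
lemma sum_primitive_root_character:
  assumes "primitive_root p \<eta>" "p > 0" "l < p" "m < p"
  shows "(\<Sum>j<p. (\<eta> ^ l * cnj \<eta> ^ m) ^ j) = (if l = m then of_nat p else 0)"
proof -
  define q where "q = \<eta> ^ l * cnj \<eta> ^ m"
  have "cnj \<eta> * \<eta> = 1"
    using norm_primitive_root[OF assms(1,2)] complex_norm_square[of \<eta>] by (simp add: mult.commute)
  then have q_shift: "q * \<eta> ^ m = \<eta> ^ l"
    unfolding q_def by (simp add: mult.assoc flip: power_mult_distrib)
  have "\<eta> ^ p = 1" using assms(1) by (simp add: primitive_root_def)
  then have q_root: "q ^ p = 1"
    unfolding q_def power_mult_distrib complex_cnj_power[symmetric]
    by (metis complex_cnj_one mult_1 power_mult mult.commute power_one)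
  have "\<eta> ^ m \<noteq> 0"
    using norm_primitive_root[OF assms(1,2)] by auto
  then have "q = 1 \<longleftrightarrow> \<eta> ^ l = \<eta> ^ m"
    using q_shift by (metis mult_cancel_right2)
  also have "\<dots> \<longleftrightarrow> l = m"
    using inj_on_primitive_root_powers[OF assms(1)] assms(3,4) by (auto dest: inj_onD)
  finally have "q = 1 \<longleftrightarrow> l = m" .
  then show ?thesis
    using q_root unfolding q_def[symmetric] by (cases "q = 1") (simp_all add: geometric_sum)
qed
lemma parseval_primitive_root:
  fixes a :: "nat \<Rightarrow> complex"
  assumes "primitive_root p \<eta>"
  shows "(\<Sum>j<p. (cmod (\<Sum>l<p. \<eta> ^ (j * l) * a l))\<^sup>2) = real p * (\<Sum>l<p. (cmod (a l))\<^sup>2)"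
proof (cases "p = 0")
  case False
  have "complex_of_real (\<Sum>j<p. (cmod (\<Sum>l<p. \<eta> ^ (j * l) * a l))\<^sup>2)
      = (\<Sum>j<p. (\<Sum>l<p. \<eta> ^ (j * l) * a l) * cnj (\<Sum>m<p. \<eta> ^ (j * m) * a m))"
    by (simp only: of_real_sum complex_norm_square)
  also have "\<dots> = (\<Sum>j<p. \<Sum>l<p. \<Sum>m<p. a l * cnj (a m) * (\<eta> ^ l * cnj \<eta> ^ m) ^ j)"
  proof (rule sum.cong[OF refl])
    fix j
    have term_eq: "\<eta> ^ (j * l) * a l * cnj (\<eta> ^ (j * m) * a m)
        = a l * cnj (a m) * (\<eta> ^ l * cnj \<eta> ^ m) ^ j" for l m
      by (simp add: power_mult_distrib ac_simps flip: power_mult)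
    show "(\<Sum>l<p. \<eta> ^ (j * l) * a l) * cnj (\<Sum>m<p. \<eta> ^ (j * m) * a m)
        = (\<Sum>l<p. \<Sum>m<p. a l * cnj (a m) * (\<eta> ^ l * cnj \<eta> ^ m) ^ j)"
      by (simp only: sum_product cnj_sum term_eq)
  qed
  also have "\<dots> = (\<Sum>l<p. \<Sum>m<p. a l * cnj (a m) * (\<Sum>j<p. (\<eta> ^ l * cnj \<eta> ^ m) ^ j))"
    by (subst sum.swap, rule sum.cong[OF refl], subst sum.swap) (simp add: sum_distrib_left)
  also have "\<dots> = (\<Sum>l<p. a l * cnj (a l) * of_nat p)"
    using False by (simp add: sum_primitive_root_character[OF assms] if_distrib cong: if_cong)
  also have "\<dots> = complex_of_real (real p * (\<Sum>l<p. (cmod (a l))\<^sup>2))"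
    unfolding of_real_mult of_real_sum complex_norm_square by (simp add: sum_distrib_left mult.commute)
  finally show ?thesis
    using of_real_eq_iff by blast
qed simp
lemma coeff_Qpoly_eq_0:
  assumes "p ^ r \<le> n"
  shows "coeff (Qpoly p \<xi> j r) n = 0"
  using assms
proof (induction r arbitrary: j n)
  case 0
  then show ?case by (simp add: coeff_1)
next
  case (Suc r)
  have "p ^ r \<le> n - l * p ^ r" if "l < p" for l
  proof -
    have "(l + 1) * p ^ r \<le> p * p ^ r" using that by (intro mult_right_mono) auto
    then show ?thesis using Suc.prems by (simp add: algebra_simps)
  qed
  then show ?case
    by (auto simp: coeff_sum coeff_monom_mult intro!: sum.neutral Suc.IH)
qed

lemma coeff_Qpoly_Suc:
  assumes "p > 0"
  shows "coeff (Qpoly p \<xi> j (Suc r)) n =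
     (if n < p ^ Suc r
      then \<xi> ^ (j * (n div p ^ r)) * coeff (Qpoly p \<xi> (n div p ^ r) r) (n mod p ^ r)
      else 0)"
proof -
  have digit: "\<xi> ^ (j * l) * (if l * p ^ r \<le> n then coeff (Qpoly p \<xi> l r) (n - l * p ^ r) else 0)
      = (if l = n div p ^ r then \<xi> ^ (j * l) * coeff (Qpoly p \<xi> l r) (n mod p ^ r) else 0)" for l
  proof (cases "l * p ^ r \<le> n")
    case True
    have "p ^ r > 0" using assms by simp
    with True have "l \<le> n div p ^ r" by (simp add: less_eq_div_iff_mult_less_eq)
    then consider "l < n div p ^ r" | "l = n div p ^ r" by linarith
    then show ?thesis
    proof cases
      case 1
      then have "p ^ r \<le> n - l * p ^ r"
        using \<open>p ^ r > 0\<close> by (simp add: less_eq_div_iff_mult_less_eq flip: Suc_le_eq)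
      with 1 show ?thesis by (simp add: coeff_Qpoly_eq_0)
    next
      case 2
      then show ?thesis by (simp add: minus_div_mult_eq_mod)
    qed
  next
    case False
    then have "l \<noteq> n div p ^ r" using div_times_less_eq_dividend[of n "p ^ r"] by auto
    with False show ?thesis by simp
  qed
  have "coeff (Qpoly p \<xi> j (Suc r)) n =
      (\<Sum>l<p. \<xi> ^ (j * l) * (if l * p ^ r \<le> n then coeff (Qpoly p \<xi> l r) (n - l * p ^ r) else 0))"
    by (auto simp: coeff_sum coeff_monom_mult intro!: sum.cong)
  also have "\<dots> = (\<Sum>l<p. if l = n div p ^ r then \<xi> ^ (j * l) * coeff (Qpoly p \<xi> l r) (n mod p ^ r) else 0)"
    by (simp only: digit)
  also have "\<dots> = (if n div p ^ r < p
      then \<xi> ^ (j * (n div p ^ r)) * coeff (Qpoly p \<xi> (n div p ^ r) r) (n mod p ^ r) else 0)"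
    by (simp add: sum.delta)
  also have "n div p ^ r < p \<longleftrightarrow> n < p ^ Suc r"
    using assms by (simp add: div_less_iff_less_mult mult.commute)
  finally show ?thesis .
qed
lemma coeff_hadamard_pow:
  assumes "k > 0"
  shows "coeff (hadamard_pow g k) n = coeff g n ^ k"
  using assms unfolding hadamard_pow_def
  by (simp add: nth_default_map_eq[where dflt' = 0] nth_default_coeffs_eq)

lemma coeff_Qpoly_power:
  assumes "p > 0" "k > 0"
  shows "coeff (Qpoly p \<xi> j r) n ^ k = coeff (Qpoly p (\<xi> ^ k) j r) n"
proof (induction r arbitrary: j n)
  case 0
  then show ?case using assms(2) by (simp add: coeff_1)
next
  case (Suc r)
  then show ?case
    unfolding coeff_Qpoly_Suc[OF assms(1)] using assms(2)
    by (simp add: power_mult_distrib mult.commute[of k] mult.assoc flip: power_mult)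
qed

lemma hadamard_pow_Qpoly:
  assumes "p > 0" "k > 0"
  shows "hadamard_pow (Qpoly p \<xi> j r) k = Qpoly p (\<xi> ^ k) j r"
  by (rule poly_eqI) (simp add: coeff_hadamard_pow coeff_Qpoly_power assms)

lemma sum_norm_poly_Qpoly_squared:
  assumes "primitive_root p \<eta>" "cmod z = 1"
  shows "(\<Sum>j<p. (cmod (poly (Qpoly p \<eta> j r) z))\<^sup>2) = real p ^ Suc r"
proof (induction r)
  case 0
  then show ?case by simp
next
  case (Suc r)
  define a where "a l = z ^ (l * p ^ r) * poly (Qpoly p \<eta> l r) z" for l
  have "poly (Qpoly p \<eta> j (Suc r)) z = (\<Sum>l<p. \<eta> ^ (j * l) * a l)" for j
    by (simp add: poly_sum poly_monom a_def)
  then have "(\<Sum>j<p. (cmod (poly (Qpoly p \<eta> j (Suc r)) z))\<^sup>2) = real p * (\<Sum>l<p. (cmod (a l))\<^sup>2)"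
    using parseval_primitive_root[OF assms(1)] by presburger
  also have "\<dots> = real p ^ Suc (Suc r)"
    using Suc.IH by (simp add: a_def norm_mult norm_power assms(2))
  finally show ?case .
qed

lemma circle_max_le:
  assumes "\<And>z. cmod z = 1 \<Longrightarrow> cmod (poly g z) \<le> B"
  shows "circle_max g \<le> B"
  unfolding circle_max_def
proof (rule cSUP_least)
  show "{z. cmod z = 1} \<noteq> {}" using norm_one by blast
qed (use assms in blast)
lemma norm_poly_Qpoly_le:
  assumes "primitive_root p \<eta>" "i < p" "cmod z = 1"
  shows "cmod (poly (Qpoly p \<eta> i r) z) \<le> sqrt (real p ^ Suc r)"
proof (rule real_le_rsqrt)
  have "(cmod (poly (Qpoly p \<eta> i r) z))\<^sup>2 \<le> (\<Sum>j<p. (cmod (poly (Qpoly p \<eta> j r) z))\<^sup>2)"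
    using assms(2) by (intro member_le_sum) auto
  then show "(cmod (poly (Qpoly p \<eta> i r) z))\<^sup>2 \<le> real p ^ Suc r"
    using sum_norm_poly_Qpoly_squared[OF assms(1,3)] by simp
qed

lemma sqrt_power_Suc_eq_powr:
  assumes "x > 0"
  shows "sqrt (x ^ Suc r) = x powr ((real r + 1) / 2)"
proof -
  have "sqrt (x ^ Suc r) = (x powr real (Suc r)) powr (1 / 2)"
    using assms by (simp add: powr_half_sqrt powr_realpow del: of_nat_Suc)
  also have "\<dots> = x powr ((real r + 1) / 2)"
    by (simp add: powr_powr add.commute)
  finally show ?thesis .
qed

theorem proposition4p3:
  fixes p i r k :: nat and \<xi> :: complex
  assumes "prime p"
    and "\<xi> ^ p = 1" and "\<forall>j. 0 < j \<and> j < p \<longrightarrow> \<xi> ^ j \<noteq> 1"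
    and "i \<le> p - 1"
    and "k > 0" and "\<not> p dvd k"
  shows "circle_max (hadamard_pow (Qpoly p \<xi> i r) k) \<le> real p powr ((real r + 1) / 2)
       \<and> real p powr ((real r + 1) / 2) = sqrt (real p * (real (p ^ r - 1) + 1))"
proof -
  have "p > 0" "i < p"
    using assms(1,4) prime_gt_0_nat[OF assms(1)] by auto
  have "primitive_root p \<xi>"
    unfolding primitive_root_def using assms(2,3) by blast
  then have "primitive_root p (\<xi> ^ k)"
    using assms(1,6) by (rule primitive_root_power)
  then have "circle_max (Qpoly p (\<xi> ^ k) i r) \<le> sqrt (real p ^ Suc r)"
    using \<open>i < p\<close> by (intro circle_max_le norm_poly_Qpoly_le)
  moreover have "real p * (real (p ^ r - 1) + 1) = real p ^ Suc r"
    using \<open>p > 0\<close> by (simp add: of_nat_diff Suc_leI)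
  ultimately show ?thesis
    using sqrt_power_Suc_eq_powr[of "real p" r] \<open>p > 0\<close> assms(5)
    by (simp add: hadamard_pow_Qpoly)
qed
end
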